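(* For every $\mu\in\rho+P_\kappa$ we have $$\sum_{\lambda\in\rho+P_\kappa}\gamma(\lambda)\,|J(\lambda,\mu)|^2=\kappa\,(n+\kappa)^{n-1}.$$
   Context: Let $n\ge1$ and $\kappa\ge1$ be integers. Let $P:=\big(\bigoplus_{i=1}^n\mathbb Z\epsilon_i\big)/\big(\mathbb Z\sum_{i=1}^n\epsilon_i\big)$, with the bilinear form $(\cdot|\cdot):P\times P\to\mathbb Z[1/n]$ determined by $(\epsilon_i|\epsilon_j)=\delta_{ij}-\frac1n$. Let $R_+:=\{\epsilon_i-\epsilon_j: 1\le i<j\le n\}$, $\theta:=\epsilon_1-\epsilon_n$, $\rho:=\sum_{i=1}^n(n-i)\epsilon_i$, $P_+:=\{\lambda\in P:(\alpha|\lambda)\ge0\ \forall\alpha\in R_+\}$ and $P_\kappa:=\{\lambda\in P_+:(\theta|\lambda)\le\kappa\}$. The symmetric group $W=S_n$ acts on $P$ by permuting the $\epsilon_i$. For $\lambda,\mu\in P$ set $$J(\lambda,\mu):=\sum_{w\in W}\mathrm{sign}(w)\exp\Big(\frac{2\pi i}{n+\kappa}(w(\lambda)|\mu)\Big).$$ Every $\lambda\in P$ has a unique representative $\sum_i\lambda_i\epsilon_i$ with $\lambda_n=0$; with respect to this representative set $\gamma(\lambda):=\kappa+n-1-\lambda_1$. *)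

theory Defs
  imports "HOL-Analysis.Analysis" "HOL-Combinatorics.Permutations"
begin

text \<open>Elements of P are represented by integer coefficient vectors
  lam :: nat => int, where lam i is the coefficient of epsilon_(i+1), i < n
  (indices are 0-based; coordinates at i >= n are ignored/zero).\<close>

definition eps :: "nat \<Rightarrow> nat \<Rightarrow> int" where
  "eps i = (\<lambda>j. if j = i then 1 else 0)"

definition form :: "nat \<Rightarrow> (nat \<Rightarrow> int) \<Rightarrow> (nat \<Rightarrow> int) \<Rightarrow> real" where
  "form n x y = (\<Sum>i<n. \<Sum>j<n. real_of_int (x i) * real_of_int (y j) *
                   ((if i = j then 1 else 0) - 1 / real n))"

text \<open>rho = sum_i (n - i) eps_i (1-based), i.e. coefficient n-1-i at 0-based index i.\<close>
definition rho :: "nat \<Rightarrow> nat \<Rightarrow> int" where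
  "rho n = (\<lambda>i. if i < n then int n - 1 - int i else 0)"

text \<open>Normalised representatives: coefficient of eps_n is 0 (and junk coordinates are 0).\<close>
definition normrep :: "nat \<Rightarrow> (nat \<Rightarrow> int) set" where
  "normrep n = {lam. \<forall>i. n - 1 \<le> i \<longrightarrow> lam i = 0}"

text \<open>P_kappa, described through normalised representatives:
  (alpha|lam) >= 0 for all positive roots alpha = eps_i - eps_j (i<j), and (theta|lam) <= kappa.\<close>
definition Pkappa :: "nat \<Rightarrow> nat \<Rightarrow> (nat \<Rightarrow> int) set" where
  "Pkappa n \<kappa> = {lam \<in> normrep n.
      (\<forall>i j. i < j \<and> j < n \<longrightarrow> form n (\<lambda>k. eps i k - eps j k) lam \<ge> 0) \<and>
      form n (\<lambda>k. eps 0 k - eps (n - 1) k) lam \<le> real \<kappa>}"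

definition rhoPkappa :: "nat \<Rightarrow> nat \<Rightarrow> (nat \<Rightarrow> int) set" where
  "rhoPkappa n \<kappa> = (\<lambda>nu. \<lambda>i. rho n i + nu i) ` Pkappa n \<kappa>"

definition Wact :: "(nat \<Rightarrow> nat) \<Rightarrow> (nat \<Rightarrow> int) \<Rightarrow> nat \<Rightarrow> int" where
  "Wact w lam = (\<lambda>j. lam (inv w j))"

definition J :: "nat \<Rightarrow> nat \<Rightarrow> (nat \<Rightarrow> int) \<Rightarrow> (nat \<Rightarrow> int) \<Rightarrow> complex" where
  "J n \<kappa> lam mu = (\<Sum>w\<in>{w. w permutes {..<n}}.
      of_int (sign w) * exp (2 * pi * \<i> / of_nat (n + \<kappa>) * of_real (form n (Wact w lam) mu)))"

text \<open>gamma(lam) = kappa + n - 1 - lam_1 for the representative with lam_n = 0.\<close>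
definition gamma :: "nat \<Rightarrow> nat \<Rightarrow> (nat \<Rightarrow> int) \<Rightarrow> int" where
  "gamma n \<kappa> lam = int \<kappa> + int n - 1 - lam 0"

end

theory Submission
  imports Defs
begin

text \<open>
  Put \<open>N = n + \<kappa>\<close> and \<open>e(x) = exp (2 \<pi> i x / N)\<close>. Up to a phase that does not depend
  on \<open>w\<close>, \<open>J(\<lambda>, \<mu>)\<close> is the determinant \<open>D(\<lambda>) = det (e(\<lambda>\<^sub>i \<mu>\<^sub>j))\<close>. The quantity \<open>|D(t)|\<^sup>2\<close>
  makes sense for every tuple \<open>t\<close> of residues mod \<open>N\<close>; it is invariant under permuting the
  entries of \<open>t\<close> and under adding a constant to all of them, and it vanishes unless the
  entries are distinct. Expanding \<open>|D|\<^sup>2\<close> and using the orthogonality of the characters of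
  \<open>\<int>/N\<close> (the \<open>\<mu>\<^sub>j\<close> are distinct residues), the sum of \<open>|D(t)|\<^sup>2\<close> is \<open>n! N\<^sup>n\<close> over all tuples and
  \<open>n! N\<^sup>n\<^sup>-\<^sup>1\<close> over those with \<open>t\<^sub>k = 0\<close>. Hence the tuples avoiding \<open>0\<close> contribute
  \<open>n! (N\<^sup>n - n N\<^sup>n\<^sup>-\<^sup>1)\<close>, and the strictly decreasing ones among them \<open>N\<^sup>n\<^sup>-\<^sup>1 (N - n) = \<kappa> N\<^sup>n\<^sup>-\<^sup>1\<close>.
  Finally, \<open>\<lambda> \<in> \<rho> + P\<^sub>\<kappa>\<close> is a strictly decreasing tuple with \<open>\<lambda>\<^sub>n = 0\<close>, exactly
  \<open>\<gamma>(\<lambda>) = N - 1 - \<lambda>\<^sub>1\<close> of its shifts avoid \<open>0\<close> and stay below \<open>N\<close>, and every strictly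
  decreasing tuple avoiding \<open>0\<close> arises from exactly one such shift.
\<close>

section \<open>Permutations and finite tuples\<close>

lemma permutes_eqI:
  assumes "\<sigma> permutes A" "\<tau> permutes A" "\<And>i. i \<in> A \<Longrightarrow> \<sigma> i = \<tau> i"
  shows "\<sigma> = \<tau>"
proof
  show "\<sigma> x = \<tau> x" for x
    using assms by (cases "x \<in> A") (auto simp: permutes_not_in)
qed

lemma permutes_eq_if_agree_off_point:
  assumes \<sigma>: "\<sigma> permutes A" and \<tau>: "\<tau> permutes A" and eq: "\<And>i. i \<in> A \<Longrightarrow> i \<noteq> k \<Longrightarrow> \<sigma> i = \<tau> i"
  shows "\<sigma> = \<tau>"
proof (rule permutes_eqI[OF \<sigma> \<tau>])
  fix i assume i: "i \<in> A"
  show "\<sigma> i = \<tau> i"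
  proof (rule ccontr)
    assume ne: "\<sigma> i \<noteq> \<tau> i"
    then have [simp]: "i = k" using eq i by blast
    have "\<sigma> k \<in> \<tau> ` A"
      using permutes_in_image[OF \<sigma>] permutes_image[OF \<tau>] i by simp
    then obtain j where j: "j \<in> A" "\<tau> j = \<sigma> k"
      by auto
    then have "j \<noteq> k" using ne by auto
    then have "\<sigma> j = \<sigma> k" using eq j by auto
    then show False using \<open>j \<noteq> k\<close> permutes_inj[OF \<sigma>] by (auto dest: injD)
  qed
qed

lemma restrict_eq_PiE:
  assumes "s \<in> A \<rightarrow>\<^sub>E B" and "\<And>i. i \<in> A \<Longrightarrow> f i = s i"
  shows "restrict f A = s"
proof -
  have "restrict f A = restrict s A"
    using assms(2) by (rule restrict_ext)
  then show ?thesis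
    using assms(1) by simp
qed

lemma image_restrict_permute:
  assumes "\<pi> permutes {..<n}"
  shows "restrict (s \<circ> \<pi>) {..<n} ` {..<n} = s ` {..<n}"
proof -
  have "restrict (s \<circ> \<pi>) {..<n} ` {..<n} = s ` \<pi> ` {..<n}"
    by (simp add: image_comp)
  then show ?thesis
    by (simp add: permutes_image[OF assms])
qed

lemma sum_value_taken_eq_sum_positions:
  fixes f :: "(nat \<Rightarrow> 'a) \<Rightarrow> 'b::comm_monoid_add"
  assumes "finite A" and inj: "\<And>t. t \<in> A \<Longrightarrow> f t \<noteq> 0 \<Longrightarrow> inj_on t {..<n}"
  shows "(\<Sum>t\<in>{t \<in> A. z \<in> t ` {..<n}}. f t) = (\<Sum>k<n. \<Sum>t\<in>{t \<in> A. t k = z}. f t)"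
proof -
  let ?I = "{t \<in> A. inj_on t {..<n}}"
  have drop_non_inj: "(\<Sum>t\<in>{t \<in> A. P t}. f t) = (\<Sum>t\<in>{t \<in> ?I. P t}. f t)" for P
  proof (rule sum.mono_neutral_right)
    show "finite {t \<in> A. P t}"
      using \<open>finite A\<close> by simp
  qed (use inj in auto)
  have "(\<Sum>t\<in>{t \<in> A. z \<in> t ` {..<n}}. f t) = (\<Sum>t\<in>{t \<in> ?I. z \<in> t ` {..<n}}. f t)"
    by (rule drop_non_inj)
  also have "{t \<in> ?I. z \<in> t ` {..<n}} = (\<Union>k<n. {t \<in> ?I. t k = z})"
    by blast
  also have "(\<Sum>t\<in>(\<Union>k<n. {t \<in> ?I. t k = z}). f t) = (\<Sum>k<n. \<Sum>t\<in>{t \<in> ?I. t k = z}. f t)"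
  proof (rule sum.UNION_disjoint)
    show "\<forall>k\<in>{..<n}. finite {t \<in> ?I. t k = z}"
      using \<open>finite A\<close> by simp
    show "\<forall>i\<in>{..<n}. \<forall>j\<in>{..<n}. i \<noteq> j \<longrightarrow> {t \<in> ?I. t i = z} \<inter> {t \<in> ?I. t j = z} = {}"
      by (auto dest: inj_onD)
  qed simp
  also have "\<dots> = (\<Sum>k<n. \<Sum>t\<in>{t \<in> A. t k = z}. f t)"
    by (intro sum.cong refl drop_non_inj[symmetric])
  finally show ?thesis .
qed

lemma strict_dec_gap:
  fixes s :: "nat \<Rightarrow> int"
  assumes dec: "\<And>i j. i < j \<Longrightarrow> j < n \<Longrightarrow> s j < s i" and "i \<le> j" "j < n"
  shows "s j + int (j - i) \<le> s i"
  using assms(2,3)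
proof (induction j)
  case (Suc j)
  show ?case
  proof (cases "i = Suc j")
    case False
    then have "s j + int (j - i) \<le> s i"
      using Suc by simp
    moreover have "s (Suc j) < s j"
      using dec Suc.prems by simp
    ultimately show ?thesis
      using False Suc.prems by (simp add: Suc_diff_le)
  qed simp
qed simp

section \<open>Roots of unity and the exponential determinant\<close>

definition unity_root :: "nat \<Rightarrow> int \<Rightarrow> complex" where
  "unity_root N m = exp (2 * pi * \<i> * of_int m / of_nat N)"

lemma unity_root_add: "unity_root N (a + b) = unity_root N a * unity_root N b"
  unfolding unity_root_def by (simp add: exp_add[symmetric] add_divide_distrib distrib_left)

lemma unity_root_0 [simp]: "unity_root N 0 = 1"
  unfolding unity_root_def by simp

lemma norm_unity_root [simp]: "norm (unity_root N a) = 1"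
  unfolding unity_root_def by (simp add: norm_exp_eq_Re)

lemma cnj_unity_root: "cnj (unity_root N a) = unity_root N (- a)"
  unfolding unity_root_def by (simp add: exp_cnj)

lemma unity_root_eq_1_iff:
  assumes "N > 0"
  shows "unity_root N d = 1 \<longleftrightarrow> int N dvd d"
proof -
  have "unity_root N d = 1 \<longleftrightarrow> (\<exists>m::int. 2 * pi * d / N = real_of_int (2 * m) * pi)"
    unfolding unity_root_def exp_eq_1 by (simp add: Im_divide_of_nat)
  also have "\<dots> \<longleftrightarrow> (\<exists>m::int. d = int N * m)"
  proof -
    have "2 * pi * d / N = real_of_int (2 * m) * pi \<longleftrightarrow> real_of_int d = real N * m" for m :: int
      using assms pi_gt_zero by (auto simp: field_simps)
    then show ?thesis by (metis of_int_eq_iff of_int_mult of_int_of_nat_eq)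
  qed
  finally show ?thesis
    unfolding dvd_def .
qed

lemma unity_root_of_nat_mult: "unity_root N (int k * d) = unity_root N d ^ k"
  by (induction k) (auto simp: unity_root_add distrib_right)

lemma sum_unity_root_mult:
  assumes "N > 0"
  shows "(\<Sum>x\<in>{0..<int N}. unity_root N (x * d)) = (if int N dvd d then of_nat N else 0)"
proof -
  have "{0..<int N} = int ` {..<N}"
    by (auto simp: image_iff intro!: bexI[of _ "nat _"])
  then have "(\<Sum>x\<in>{0..<int N}. unity_root N (x * d)) = (\<Sum>k<N. unity_root N d ^ k)"
    by (simp add: sum.reindex unity_root_of_nat_mult)
  moreover have "unity_root N d ^ N = 1"
    using unity_root_eq_1_iff[OF assms, of "int N * d"] by (simp add: unity_root_of_nat_mult)
  ultimately show ?thesis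
    using unity_root_eq_1_iff[OF assms, of d] by (simp add: sum_gp_strict)
qed

lemma sum_unity_root_diff_eq_0:
  assumes "N > 0" and "a \<in> {0..<int N}" "b \<in> {0..<int N}" "a \<noteq> b"
  shows "(\<Sum>x\<in>{0..<int N}. unity_root N (x * (a - b))) = 0"
proof -
  have "\<not> int N dvd a - b"
    using dvd_imp_le_int[of "a - b" "int N"] assms(2-4) by auto
  then show ?thesis
    using sum_unity_root_mult[OF assms(1)] by simp
qed

text \<open>The Leibniz expansion of the determinant of the matrix
  \<open>(unity_root N (t i * mu j))\<^sub>i\<^sub>,\<^sub>j\<close>.\<close>
definition exp_det :: "nat \<Rightarrow> nat \<Rightarrow> (nat \<Rightarrow> int) \<Rightarrow> (nat \<Rightarrow> int) \<Rightarrow> complex" where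
  "exp_det n N mu t =
     (\<Sum>\<sigma> | \<sigma> permutes {..<n}. of_int (sign \<sigma>) * (\<Prod>i<n. unity_root N (t i * mu (\<sigma> i))))"

lemma exp_det_cong: "(\<And>i. i < n \<Longrightarrow> t i = t' i) \<Longrightarrow> exp_det n N mu t = exp_det n N mu t'"
  unfolding exp_det_def by (intro sum.cong refl arg_cong2[where f = "(*)"] prod.cong) simp_all

lemma exp_det_restrict [simp]: "exp_det n N mu (restrict t {..<n}) = exp_det n N mu t"
  by (rule exp_det_cong) simp

lemma exp_det_permute:
  assumes \<pi>: "\<pi> permutes {..<n}"
  shows "exp_det n N mu (t \<circ> \<pi>) = of_int (sign \<pi>) * exp_det n N mu t"
proof -
  have "exp_det n N mu (t \<circ> \<pi>) = (\<Sum>\<sigma> | \<sigma> permutes {..<n}.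
      of_int (sign (\<sigma> \<circ> \<pi>)) * (\<Prod>i<n. unity_root N (t (\<pi> i) * mu (\<sigma> (\<pi> i)))))"
    unfolding exp_det_def by (subst sum_permutations_compose_right[OF \<pi>]) simp
  also have "\<dots> = (\<Sum>\<sigma> | \<sigma> permutes {..<n}.
      of_int (sign \<pi>) * (of_int (sign \<sigma>) * (\<Prod>i<n. unity_root N (t i * mu (\<sigma> i)))))"
  proof (intro sum.cong refl)
    fix \<sigma> assume "\<sigma> \<in> {\<sigma>. \<sigma> permutes {..<n}}"
    then have "sign (\<sigma> \<circ> \<pi>) = sign \<sigma> * sign \<pi>"
      using \<pi> by (simp add: sign_compose permutes_imp_permutation[OF finite_lessThan])
    moreover have "(\<Prod>i<n. unity_root N (t (\<pi> i) * mu (\<sigma> (\<pi> i))))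
        = (\<Prod>i<n. unity_root N (t i * mu (\<sigma> i)))"
      using prod.permute[OF \<pi>, of "\<lambda>i. unity_root N (t i * mu (\<sigma> i))"] by (simp add: comp_def)
    ultimately show "of_int (sign (\<sigma> \<circ> \<pi>)) * (\<Prod>i<n. unity_root N (t (\<pi> i) * mu (\<sigma> (\<pi> i))))
        = of_int (sign \<pi>) * (of_int (sign \<sigma>) * (\<Prod>i<n. unity_root N (t i * mu (\<sigma> i))))"
      by simp
  qed
  finally show ?thesis
    unfolding exp_det_def by (simp add: sum_distrib_left)
qed

lemma norm_exp_det_permute:
  assumes "\<pi> permutes {..<n}" and "\<And>i. i < n \<Longrightarrow> t' i = t (\<pi> i)"
  shows "norm (exp_det n N mu t') = norm (exp_det n N mu t)"
proof -
  have "exp_det n N mu t' = exp_det n N mu (t \<circ> \<pi>)"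
    using assms(2) by (intro exp_det_cong) simp
  also have "\<dots> = of_int (sign \<pi>) * exp_det n N mu t"
    using assms(1) by (rule exp_det_permute)
  finally show ?thesis by (simp add: norm_mult sign_def)
qed

lemma exp_det_eq_0_if_not_inj:
  assumes "\<not> inj_on t {..<n}"
  shows "exp_det n N mu t = 0"
proof -
  obtain i j where ij: "i < n" "j < n" "i \<noteq> j" "t i = t j"
    using assms unfolding inj_on_def by auto
  have "exp_det n N mu t = exp_det n N mu (t \<circ> Transposition.transpose i j)"
    using ij by (intro exp_det_cong) (simp add: Transposition.transpose_def)
  also have "\<dots> = - exp_det n N mu t"
    using ij by (simp add: exp_det_permute permutes_swap_id sign_swap_id)
  finally show ?thesis by simp
qed

text \<open>Shifting \<open>t\<close> by \<open>c\<close> multiplies every term by the same unimodular factor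
  \<open>\<Prod>i<n. unity_root N (c * mu i)\<close>.\<close>
lemma norm_exp_det_shift:
  assumes "\<And>i. i < n \<Longrightarrow> t' i = t i + c"
  shows "norm (exp_det n N mu t') = norm (exp_det n N mu t)"
proof -
  let ?K = "\<Prod>i<n. unity_root N (c * mu i)"
  have "exp_det n N mu t' = ?K * exp_det n N mu t"
    unfolding exp_det_def sum_distrib_left
  proof (intro sum.cong refl)
    fix \<sigma> assume "\<sigma> \<in> {\<sigma>. \<sigma> permutes {..<n}}"
    then have \<sigma>: "\<sigma> permutes {..<n}" by simp
    have "(\<Prod>i<n. unity_root N (t' i * mu (\<sigma> i)))
        = (\<Prod>i<n. unity_root N (t i * mu (\<sigma> i))) * (\<Prod>i<n. unity_root N (c * mu (\<sigma> i)))"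
      using assms by (simp add: prod.distrib[symmetric] unity_root_add[symmetric] algebra_simps)
    also have "(\<Prod>i<n. unity_root N (c * mu (\<sigma> i))) = ?K"
      using prod.permute[OF \<sigma>, of "\<lambda>i. unity_root N (c * mu i)"] by (simp add: comp_def)
    finally show "of_int (sign \<sigma>) * (\<Prod>i<n. unity_root N (t' i * mu (\<sigma> i)))
        = ?K * (of_int (sign \<sigma>) * (\<Prod>i<n. unity_root N (t i * mu (\<sigma> i))))"
      by simp
  qed
  then show ?thesis by (simp add: norm_mult prod_norm[symmetric])
qed

lemma norm_exp_det_sq_expand:
  "complex_of_real ((norm (exp_det n N mu t))\<^sup>2) =
     (\<Sum>\<sigma> | \<sigma> permutes {..<n}. \<Sum>\<tau> | \<tau> permutes {..<n}. of_int (sign \<sigma> * sign \<tau>) *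
        (\<Prod>i<n. unity_root N (t i * (mu (\<sigma> i) - mu (\<tau> i)))))"
proof -
  have cnj_exp_det: "cnj (exp_det n N mu t) = (\<Sum>\<tau> | \<tau> permutes {..<n}.
      of_int (sign \<tau>) * (\<Prod>i<n. unity_root N (- (t i * mu (\<tau> i)))))"
    unfolding exp_det_def by (simp add: cnj_sum cnj_prod cnj_unity_root)
  show ?thesis
    unfolding complex_norm_square cnj_exp_det unfolding exp_det_def sum_product
  proof (intro sum.cong refl)
    fix \<sigma> \<tau>
    have "(\<Prod>i<n. unity_root N (t i * mu (\<sigma> i))) * (\<Prod>i<n. unity_root N (- (t i * mu (\<tau> i))))
        = (\<Prod>i<n. unity_root N (t i * (mu (\<sigma> i) - mu (\<tau> i))))"
      by (simp add: prod.distrib[symmetric] unity_root_add[symmetric] algebra_simps)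
    then show "of_int (sign \<sigma>) * (\<Prod>i<n. unity_root N (t i * mu (\<sigma> i))) *
        (of_int (sign \<tau>) * (\<Prod>i<n. unity_root N (- (t i * mu (\<tau> i))))) =
        of_int (sign \<sigma> * sign \<tau>) * (\<Prod>i<n. unity_root N (t i * (mu (\<sigma> i) - mu (\<tau> i))))"
      by (simp add: algebra_simps)
  qed
qed

text \<open>Summed over a box of tuples, each factor of the expansion becomes a character sum; when
  these kill every pair \<open>\<sigma> \<noteq> \<tau>\<close>, only the \<open>n!\<close> diagonal terms survive.\<close>
lemma sum_norm_exp_det_sq_PiE:
  assumes fin: "\<And>i. i < n \<Longrightarrow> finite (B i)"
    and off_diag: "\<And>\<sigma> \<tau>. \<sigma> permutes {..<n} \<Longrightarrow> \<tau> permutes {..<n} \<Longrightarrow> \<sigma> \<noteq> \<tau> \<Longrightarrow>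
      \<exists>i<n. (\<Sum>x\<in>B i. unity_root N (x * (mu (\<sigma> i) - mu (\<tau> i)))) = 0"
  shows "(\<Sum>t\<in>PiE {..<n} B. (norm (exp_det n N mu t))\<^sup>2) = fact n * (\<Prod>i<n. real (card (B i)))"
proof -
  let ?P = "{\<sigma>. \<sigma> permutes {..<n}}"
  let ?C = "complex_of_real (\<Prod>i<n. real (card (B i)))"
  let ?c = "\<lambda>\<sigma> \<tau>. \<Prod>i<n. \<Sum>x\<in>B i. unity_root N (x * (mu (\<sigma> i) - mu (\<tau> i)))"
  have "complex_of_real (\<Sum>t\<in>PiE {..<n} B. (norm (exp_det n N mu t))\<^sup>2)
      = (\<Sum>\<sigma>\<in>?P. \<Sum>\<tau>\<in>?P. of_int (sign \<sigma> * sign \<tau>) *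
           (\<Sum>t\<in>PiE {..<n} B. \<Prod>i<n. unity_root N (t i * (mu (\<sigma> i) - mu (\<tau> i)))))"
    unfolding of_real_sum norm_exp_det_sq_expand
    by (subst sum.swap) (simp add: sum.swap[of _ _ "PiE {..<n} B"] sum_distrib_left)
  also have "\<dots> = (\<Sum>\<sigma>\<in>?P. \<Sum>\<tau>\<in>?P. of_int (sign \<sigma> * sign \<tau>) * ?c \<sigma> \<tau>)"
    using fin by (intro sum.cong refl arg_cong2[where f = "(*)"] prod_sum_PiE[symmetric]) auto
  also have "\<dots> = (\<Sum>\<sigma>\<in>?P. ?C)"
  proof (intro sum.cong refl)
    fix \<sigma> assume \<sigma>: "\<sigma> \<in> ?P"
    have "?c \<sigma> \<tau> = (if \<sigma> = \<tau> then ?C else 0)" if "\<tau> \<in> ?P" for \<tau>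
      using off_diag[of \<sigma> \<tau>] \<sigma> that by (auto simp: prod_zero)
    then have "(\<Sum>\<tau>\<in>?P. of_int (sign \<sigma> * sign \<tau>) * ?c \<sigma> \<tau>) = (\<Sum>\<tau>\<in>?P. if \<sigma> = \<tau> then ?C else 0)"
      by (intro sum.cong refl) (auto simp flip: of_int_mult)
    also have "\<dots> = ?C"
      using \<sigma> by (simp add: finite_permutations)
    finally show "(\<Sum>\<tau>\<in>?P. of_int (sign \<sigma> * sign \<tau>) * ?c \<sigma> \<tau>) = ?C" .
  qed
  also have "\<dots> = of_real (fact n * (\<Prod>i<n. real (card (B i))))"
    by (simp add: card_permutations)
  finally show ?thesis
    by (simp only: of_real_eq_iff)
qed

lemma sum_unity_root_perm_diff_eq_0:
  assumes N: "N > 0" and mu: "inj_on mu {..<n}" "mu ` {..<n} \<subseteq> {0..<int N}"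
    and \<sigma>: "\<sigma> permutes {..<n}" and \<tau>: "\<tau> permutes {..<n}" and i: "i < n" "\<sigma> i \<noteq> \<tau> i"
  shows "(\<Sum>x\<in>{0..<int N}. unity_root N (x * (mu (\<sigma> i) - mu (\<tau> i)))) = 0"
proof -
  have "\<sigma> i < n" "\<tau> i < n"
    using i permutes_in_image[OF \<sigma>] permutes_in_image[OF \<tau>] by auto
  then have "mu (\<sigma> i) \<noteq> mu (\<tau> i)" "mu (\<sigma> i) \<in> {0..<int N}" "mu (\<tau> i) \<in> {0..<int N}"
    using i mu by (auto dest: inj_onD)
  then show ?thesis
    by (rule sum_unity_root_diff_eq_0[OF N, rotated -1])
qed

lemma sum_norm_exp_det_sq_box:
  assumes N: "N > 0" and mu: "inj_on mu {..<n}" "mu ` {..<n} \<subseteq> {0..<int N}"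
  shows "(\<Sum>t\<in>{..<n} \<rightarrow>\<^sub>E {0..<int N}. (norm (exp_det n N mu t))\<^sup>2) = fact n * real N ^ n"
proof -
  have "\<exists>i<n. (\<Sum>x\<in>{0..<int N}. unity_root N (x * (mu (\<sigma> i) - mu (\<tau> i)))) = 0"
    if \<sigma>: "\<sigma> permutes {..<n}" and \<tau>: "\<tau> permutes {..<n}" and "\<sigma> \<noteq> \<tau>" for \<sigma> \<tau>
  proof -
    obtain i where "i < n" "\<sigma> i \<noteq> \<tau> i"
      using permutes_eqI[OF \<sigma> \<tau>] \<open>\<sigma> \<noteq> \<tau>\<close> by auto
    then show ?thesis
      using sum_unity_root_perm_diff_eq_0[OF N mu \<sigma> \<tau>] by blast
  qed
  then show ?thesis
    using sum_norm_exp_det_sq_PiE[of n "\<lambda>_. {0..<int N}" N mu] by simp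
qed

lemma sum_norm_exp_det_sq_box_zero_at:
  assumes N: "N > 0" and mu: "inj_on mu {..<n}" "mu ` {..<n} \<subseteq> {0..<int N}" and k: "k < n"
  shows "(\<Sum>t | t \<in> {..<n} \<rightarrow>\<^sub>E {0..<int N} \<and> t k = 0. (norm (exp_det n N mu t))\<^sup>2)
    = fact n * real N ^ (n - 1)"
proof -
  define B where "B i = (if i = k then {0} else {0..<int N})" for i
  have box: "{t. t \<in> {..<n} \<rightarrow>\<^sub>E {0..<int N} \<and> t k = 0} = PiE {..<n} B"
  proof (intro equalityI subsetI)
    fix t assume "t \<in> {t. t \<in> {..<n} \<rightarrow>\<^sub>E {0..<int N} \<and> t k = 0}"
    then show "t \<in> PiE {..<n} B"
      by (auto simp: B_def PiE_iff)
  next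
    fix t assume t: "t \<in> PiE {..<n} B"
    then have "t k = 0"
      using PiE_mem[OF t, of k] k by (simp add: B_def)
    moreover have "t i \<in> {0..<int N}" if "i < n" for i
      using PiE_mem[OF t, of i] N \<open>t k = 0\<close> that by (cases "i = k") (auto simp: B_def)
    ultimately show "t \<in> {t. t \<in> {..<n} \<rightarrow>\<^sub>E {0..<int N} \<and> t k = 0}"
      using t by (auto simp: PiE_iff)
  qed
  have "\<exists>i<n. (\<Sum>x\<in>B i. unity_root N (x * (mu (\<sigma> i) - mu (\<tau> i)))) = 0"
    if \<sigma>: "\<sigma> permutes {..<n}" and \<tau>: "\<tau> permutes {..<n}" and "\<sigma> \<noteq> \<tau>" for \<sigma> \<tau>
  proof -
    obtain i where "i < n" "i \<noteq> k" "\<sigma> i \<noteq> \<tau> i"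
      using permutes_eq_if_agree_off_point[OF \<sigma> \<tau>, of k] \<open>\<sigma> \<noteq> \<tau>\<close> by auto
    then show ?thesis
      using sum_unity_root_perm_diff_eq_0[OF N mu \<sigma> \<tau>] by (auto simp: B_def)
  qed
  then have "(\<Sum>t\<in>PiE {..<n} B. (norm (exp_det n N mu t))\<^sup>2) = fact n * (\<Prod>i<n. real (card (B i)))"
    by (intro sum_norm_exp_det_sq_PiE) (auto simp: B_def)
  also have "(\<Prod>i<n. real (card (B i))) = (\<Prod>i\<in>{..<n} - {k}. real N)"
    using k by (subst prod.remove[of _ k]) (auto simp: B_def intro!: prod.cong)
  also have "\<dots> = real N ^ (n - 1)"
    using k by simp
  finally show ?thesis
    by (simp add: box)
qed

lemma sum_norm_exp_det_sq_box_avoiding_0: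
  assumes N: "N > 0" and mu: "inj_on mu {..<n}" "mu ` {..<n} \<subseteq> {0..<int N}"
  shows "(\<Sum>t\<in>{t \<in> {..<n} \<rightarrow>\<^sub>E {0..<int N}. 0 \<notin> t ` {..<n}}. (norm (exp_det n N mu t))\<^sup>2)
    = fact n * (real N ^ n - real n * real N ^ (n - 1))"
proof -
  let ?A = "{..<n} \<rightarrow>\<^sub>E {0..<int N}"
  let ?D = "\<lambda>t. (norm (exp_det n N mu t))\<^sup>2"
  have fin: "finite ?A"
    by (simp add: finite_PiE)
  have "(\<Sum>t\<in>?A. ?D t)
      = (\<Sum>t\<in>?A. if 0 \<notin> t ` {..<n} then ?D t else 0) + (\<Sum>t\<in>?A. if 0 \<in> t ` {..<n} then ?D t else 0)"
    unfolding sum.distrib[symmetric] by (intro sum.cong) auto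
  also have "\<dots> = (\<Sum>t\<in>{t \<in> ?A. 0 \<notin> t ` {..<n}}. ?D t) + (\<Sum>t\<in>{t \<in> ?A. 0 \<in> t ` {..<n}}. ?D t)"
    using fin by (simp add: sum.inter_filter)
  also have "(\<Sum>t\<in>{t \<in> ?A. 0 \<in> t ` {..<n}}. ?D t) = (\<Sum>k<n. \<Sum>t\<in>{t \<in> ?A. t k = 0}. ?D t)"
    using fin exp_det_eq_0_if_not_inj by (intro sum_value_taken_eq_sum_positions) auto
  also have "\<dots> = real n * (fact n * real N ^ (n - 1))"
    using sum_norm_exp_det_sq_box_zero_at[OF N mu] by simp
  finally show ?thesis
    using sum_norm_exp_det_sq_box[OF N mu] by (simp add: algebra_simps)
qed

section \<open>Strictly decreasing tuples\<close>

definition dec_tuples :: "nat \<Rightarrow> 'a::linorder set \<Rightarrow> (nat \<Rightarrow> 'a) set" where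
  "dec_tuples n S = {s \<in> {..<n} \<rightarrow>\<^sub>E S. strict_antimono_on {..<n} s}"

lemma dec_tuples_iff:
  "s \<in> dec_tuples n S \<longleftrightarrow> s \<in> {..<n} \<rightarrow>\<^sub>E S \<and> (\<forall>i j. i < j \<longrightarrow> j < n \<longrightarrow> s j < s i)"
  unfolding dec_tuples_def monotone_on_def by auto

lemma dec_tuples_inj_on: "s \<in> dec_tuples n S \<Longrightarrow> inj_on s {..<n}"
  unfolding dec_tuples_def using strict_antimono_iff_antimono by blast

lemma dec_tuples_less: "s \<in> dec_tuples n S \<Longrightarrow> i < j \<Longrightarrow> j < n \<Longrightarrow> s j < s i"
  unfolding dec_tuples_def monotone_on_def by auto

lemma dec_tuples_mem: "s \<in> dec_tuples n S \<Longrightarrow> k < n \<Longrightarrow> s k \<in> S"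
  unfolding dec_tuples_def by (auto intro: PiE_mem)

lemma dec_tuples_bounds:
  assumes s: "s \<in> dec_tuples n S" and k: "k < n"
  shows "s (n - 1) \<le> s k" "s k \<le> s 0"
proof -
  show "s (n - 1) \<le> s k"
    using dec_tuples_less[OF s, of k "n - 1"] k by (cases "k = n - 1") (simp_all add: le_less)
  show "s k \<le> s 0"
    using dec_tuples_less[OF s, of 0 k] k by (cases "k = 0") (simp_all add: le_less)
qed

lemma restrict_in_dec_tuples_iff:
  "restrict s {..<n} \<in> dec_tuples n S \<longleftrightarrow>
     (\<forall>k<n. s k \<in> S) \<and> (\<forall>i j. i < j \<longrightarrow> j < n \<longrightarrow> s j < s i)"
  by (auto simp: dec_tuples_iff restrict_PiE_iff)

lemma sorted_list_of_set_image_dec_tuple: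
  assumes s: "s \<in> dec_tuples n S"
  shows "sorted_list_of_set (s ` {..<n}) = rev (map s [0..<n])"
proof -
  have "sorted_wrt (\<lambda>i j. s j < s i) [0..<n]"
    using dec_tuples_less[OF s] by (auto simp: sorted_wrt_iff_nth_less)
  then have "sorted_wrt (<) (rev (map s [0..<n]))"
    by (simp add: sorted_wrt_rev sorted_wrt_map)
  moreover have "card (s ` {..<n}) = n"
    using card_image[OF dec_tuples_inj_on[OF s]] by simp
  ultimately show ?thesis
    by (subst sorted_list_of_set_unique[symmetric]) auto
qed

lemma dec_tuples_eqI:
  assumes s: "s \<in> dec_tuples n S" and s': "s' \<in> dec_tuples n S" and "s ` {..<n} = s' ` {..<n}"
  shows "s = s'"
proof -
  have "rev (map s [0..<n]) = sorted_list_of_set (s ` {..<n})"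
    by (rule sorted_list_of_set_image_dec_tuple[OF s, symmetric])
  also have "\<dots> = rev (map s' [0..<n])"
    unfolding assms(3) by (rule sorted_list_of_set_image_dec_tuple[OF s'])
  finally have "map s [0..<n] = map s' [0..<n]"
    by simp
  then have "s i = s' i" if "i \<in> {..<n}" for i
    using that by (simp add: map_eq_conv)
  moreover have "s \<in> {..<n} \<rightarrow>\<^sub>E S" "s' \<in> {..<n} \<rightarrow>\<^sub>E S"
    using s s' by (simp_all add: dec_tuples_def)
  ultimately show ?thesis
    using PiE_ext[where x = s and y = s' and k = "{..<n}"] by blast
qed

lemma dec_tuple_sorting:
  assumes t: "t \<in> {..<n} \<rightarrow>\<^sub>E S" and inj: "inj_on t {..<n}"
  obtains s \<pi> where "s \<in> dec_tuples n S" "\<pi> permutes {..<n}" "t = restrict (s \<circ> \<pi>) {..<n}"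
proof -
  define L where "L = rev (sorted_list_of_set (t ` {..<n}))"
  have L: "length L = n" "set L = t ` {..<n}" "sorted_wrt (>) L"
    using card_image[OF inj] by (auto simp: L_def sorted_wrt_rev)
  define s where "s = restrict ((!) L) {..<n}"
  have "L ! i \<in> S" if "i < n" for i
    using t nth_mem[of i L] L(1,2) that by auto
  then have s: "s \<in> dec_tuples n S"
    using L(1,3) unfolding dec_tuples_iff s_def by (auto simp: sorted_wrt_iff_nth_less)
  have "t ` {..<n} = s ` {..<n}"
    using L(1,2) nth_image[of n L] by (simp add: s_def lessThan_atLeast0)
  have "image_mset t (mset_set {..<n}) = mset_set (t ` {..<n})"
    by (rule image_mset_mset_set[OF inj])
  also have "\<dots> = image_mset s (mset_set {..<n})"
    unfolding \<open>t ` {..<n} = s ` {..<n}\<close> by (rule image_mset_mset_set[symmetric, OF dec_tuples_inj_on[OF s]])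
  finally obtain \<pi> where \<pi>: "\<pi> permutes {..<n}" and t_eq: "\<forall>i\<in>{..<n}. t i = s (\<pi> i)"
    by (rule image_mset_eq_implies_permutes[OF finite_lessThan])
  have "t = restrict t {..<n}"
    using t by simp
  also have "\<dots> = restrict (s \<circ> \<pi>) {..<n}"
    using t_eq by (intro restrict_ext) simp
  finally have "t = restrict (s \<circ> \<pi>) {..<n}" .
  with s \<pi> show ?thesis
    by (rule that)
qed

lemma bij_betw_arrange_dec_tuples:
  "bij_betw (\<lambda>(s, \<pi>). restrict (s \<circ> \<pi>) {..<n}) (dec_tuples n S \<times> {\<pi>. \<pi> permutes {..<n}})
    {t \<in> {..<n} \<rightarrow>\<^sub>E S. inj_on t {..<n}}"
proof (rule bij_betw_imageI)
  show "inj_on (\<lambda>(s, \<pi>). restrict (s \<circ> \<pi>) {..<n}) (dec_tuples n S \<times> {\<pi>. \<pi> permutes {..<n}})"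
  proof (rule inj_onI, clarsimp)
    fix s \<pi> s' \<pi>'
    assume s: "s \<in> dec_tuples n S" and s': "s' \<in> dec_tuples n S"
      and \<pi>: "\<pi> permutes {..<n}" and \<pi>': "\<pi>' permutes {..<n}"
      and eq: "restrict (s \<circ> \<pi>) {..<n} = restrict (s' \<circ> \<pi>') {..<n}"
    have "s = s'"
      using image_restrict_permute[OF \<pi>, of s] image_restrict_permute[OF \<pi>', of s'] eq
      by (intro dec_tuples_eqI[OF s s']) simp
    moreover have "\<pi> = \<pi>'"
    proof (rule permutes_eqI[OF \<pi> \<pi>'])
      fix i assume i: "i \<in> {..<n}"
      then have "s (\<pi> i) = s (\<pi>' i)"
        using fun_cong[OF eq, of i] \<open>s = s'\<close> by simp
      then show "\<pi> i = \<pi>' i"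
        using dec_tuples_inj_on[OF s] permutes_in_image[OF \<pi>] permutes_in_image[OF \<pi>'] i
        by (auto dest: inj_onD)
    qed
    ultimately show "s = s' \<and> \<pi> = \<pi>'" ..
  qed
  show "(\<lambda>(s, \<pi>). restrict (s \<circ> \<pi>) {..<n}) ` (dec_tuples n S \<times> {\<pi>. \<pi> permutes {..<n}})
      = {t \<in> {..<n} \<rightarrow>\<^sub>E S. inj_on t {..<n}}"
  proof (intro equalityI subsetI)
    fix t assume "t \<in> (\<lambda>(s, \<pi>). restrict (s \<circ> \<pi>) {..<n}) ` (dec_tuples n S \<times> {\<pi>. \<pi> permutes {..<n}})"
    then obtain s \<pi> where s: "s \<in> dec_tuples n S" and \<pi>: "\<pi> permutes {..<n}"
      and t: "t = restrict (s \<circ> \<pi>) {..<n}" by auto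
    have "inj_on t {..<n}"
      using dec_tuples_inj_on[OF s] permutes_inj_on[OF \<pi>] permutes_image[OF \<pi>]
      by (simp add: t comp_inj_on)
    moreover have "t \<in> {..<n} \<rightarrow>\<^sub>E S"
      using dec_tuples_mem[OF s] permutes_in_image[OF \<pi>] by (simp add: t restrict_PiE_iff)
    ultimately show "t \<in> {t \<in> {..<n} \<rightarrow>\<^sub>E S. inj_on t {..<n}}"
      by simp
  next
    fix t assume "t \<in> {t \<in> {..<n} \<rightarrow>\<^sub>E S. inj_on t {..<n}}"
    then obtain s \<pi> where "s \<in> dec_tuples n S" "\<pi> permutes {..<n}" "t = restrict (s \<circ> \<pi>) {..<n}"
      by (auto elim: dec_tuple_sorting)
    then show "t \<in> (\<lambda>(s, \<pi>). restrict (s \<circ> \<pi>) {..<n}) ` (dec_tuples n S \<times> {\<pi>. \<pi> permutes {..<n}})"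
      by (intro image_eqI[of _ _ "(s, \<pi>)"]) auto
  qed
qed

lemma sum_inj_tuples_eq_fact_mult_sum_dec_tuples:
  fixes f :: "(nat \<Rightarrow> 'a::linorder) \<Rightarrow> real"
  assumes perm_invariant:
    "\<And>t \<pi>. t \<in> {..<n} \<rightarrow>\<^sub>E S \<Longrightarrow> \<pi> permutes {..<n} \<Longrightarrow> f (restrict (t \<circ> \<pi>) {..<n}) = f t"
  shows "(\<Sum>t\<in>{t \<in> {..<n} \<rightarrow>\<^sub>E S. inj_on t {..<n}}. f t) = fact n * (\<Sum>s\<in>dec_tuples n S. f s)"
proof -
  let ?P = "{\<pi>. \<pi> permutes {..<n}}"
  have "(\<Sum>t\<in>{t \<in> {..<n} \<rightarrow>\<^sub>E S. inj_on t {..<n}}. f t)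
      = (\<Sum>x\<in>dec_tuples n S \<times> ?P. f ((\<lambda>(s, \<pi>). restrict (s \<circ> \<pi>) {..<n}) x))"
    by (rule sum.reindex_bij_betw[OF bij_betw_arrange_dec_tuples, symmetric])
  also have "\<dots> = (\<Sum>(s, \<pi>)\<in>dec_tuples n S \<times> ?P. f s)"
    by (intro sum.cong refl) (auto simp: dec_tuples_def intro: perm_invariant)
  also have "\<dots> = (\<Sum>s\<in>dec_tuples n S. \<Sum>\<pi>\<in>?P. f s)"
    by (rule sum.cartesian_product[symmetric])
  also have "\<dots> = fact n * (\<Sum>s\<in>dec_tuples n S. f s)"
    by (simp add: card_permutations sum_distrib_left)
  finally show ?thesis .
qed

lemma shift_in_dec_tuples_avoiding_0:
  fixes N :: int
  assumes s: "s \<in> dec_tuples n {0..<N}" "s (n - 1) = 0" and c: "1 \<le> c" "c \<le> N - 1 - s 0"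
  shows "restrict (\<lambda>i. s i + c) {..<n} \<in> {s \<in> dec_tuples n {0..<N}. 0 \<notin> s ` {..<n}}"
proof -
  have range: "0 < s k + c \<and> s k + c < N" if "k < n" for k
    using dec_tuples_bounds[OF s(1) that] s(2) c by auto
  then have "restrict (\<lambda>i. s i + c) {..<n} \<in> dec_tuples n {0..<N}"
    using dec_tuples_less[OF s(1)] by (simp add: restrict_in_dec_tuples_iff less_imp_le)
  moreover have "0 \<notin> restrict (\<lambda>i. s i + c) {..<n} ` {..<n}"
    using range by fastforce
  ultimately show ?thesis
    by simp
qed

lemma unshift_in_dec_tuples_min_0:
  fixes N :: int
  assumes n: "n \<ge> 1" and b: "b \<in> dec_tuples n {0..<N}" "0 \<notin> b ` {..<n}"
  shows "restrict (\<lambda>i. b i - b (n - 1)) {..<n} \<in> {s \<in> dec_tuples n {0..<N}. s (n - 1) = 0}"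
    and "b (n - 1) \<in> {1..N - 1 - (b 0 - b (n - 1))}"
proof -
  have last: "n - 1 < n"
    using n by simp
  then have "b (n - 1) \<noteq> 0" "b (n - 1) \<in> {0..<N}" "b 0 \<in> {0..<N}"
    using dec_tuples_mem[OF b(1)] b(2) n by auto
  moreover have "b k - b (n - 1) \<in> {0..<N}" if "k < n" for k
    using dec_tuples_bounds[OF b(1) that] dec_tuples_mem[OF b(1) that] \<open>b (n - 1) \<in> {0..<N}\<close>
    by auto
  ultimately show "restrict (\<lambda>i. b i - b (n - 1)) {..<n} \<in> {s \<in> dec_tuples n {0..<N}. s (n - 1) = 0}"
    and "b (n - 1) \<in> {1..N - 1 - (b 0 - b (n - 1))}"
    using dec_tuples_less[OF b(1)] last by (auto simp: restrict_in_dec_tuples_iff)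
qed

lemma bij_betw_shift_dec_tuples:
  fixes N :: int
  assumes n: "n \<ge> 1"
  shows "bij_betw (\<lambda>(s, c). restrict (\<lambda>i. s i + c) {..<n})
    (SIGMA s:{s \<in> dec_tuples n {0..<N}. s (n - 1) = 0}. {1..N - 1 - s 0})
    {s \<in> dec_tuples n {0..<N}. 0 \<notin> s ` {..<n}}"
proof -
  let ?shift = "\<lambda>(s, c). restrict (\<lambda>i. s i + c) {..<n}"
  let ?unshift = "\<lambda>b. (restrict (\<lambda>i. b i - b (n - 1)) {..<n}, b (n - 1))"
  let ?Z = "{s \<in> dec_tuples n {0..<N}. s (n - 1) = 0}"
  let ?P = "{s \<in> dec_tuples n {0..<N}. 0 \<notin> s ` {..<n}}"
  have last: "n - 1 < n"
    using n by simp
  show ?thesis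
  proof (rule bij_betw_byWitness[where f' = ?unshift])
    show "\<forall>a\<in>SIGMA s:?Z. {1..N - 1 - s 0}. ?unshift (?shift a) = a"
    proof
      fix a assume "a \<in> (SIGMA s:?Z. {1..N - 1 - s 0})"
      then obtain s c where a: "a = (s, c)" and s: "s \<in> dec_tuples n {0..<N}" "s (n - 1) = 0"
        by auto
      have "restrict (\<lambda>i. ?shift a i - ?shift a (n - 1)) {..<n} = s"
        using s last by (intro restrict_eq_PiE[of s "{..<n}" "{0..<N}"]) (auto simp: a dec_tuples_def)
      then show "?unshift (?shift a) = a"
        using a s last by simp
    qed
    show "\<forall>b\<in>?P. ?shift (?unshift b) = b"
    proof
      fix b assume "b \<in> ?P"
      then have "restrict (\<lambda>i. restrict (\<lambda>i. b i - b (n - 1)) {..<n} i + b (n - 1)) {..<n} = b"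
        by (intro restrict_eq_PiE[of b "{..<n}" "{0..<N}"]) (auto simp: dec_tuples_def)
      then show "?shift (?unshift b) = b"
        by simp
    qed
    show "?shift ` (SIGMA s:?Z. {1..N - 1 - s 0}) \<subseteq> ?P"
    proof
      fix b assume "b \<in> ?shift ` (SIGMA s:?Z. {1..N - 1 - s 0})"
      then obtain s c where b: "b = restrict (\<lambda>i. s i + c) {..<n}"
        and s: "s \<in> dec_tuples n {0..<N}" "s (n - 1) = 0" and c: "1 \<le> c" "c \<le> N - 1 - s 0"
        by auto
      show "b \<in> ?P"
        unfolding b by (rule shift_in_dec_tuples_avoiding_0[OF s c])
    qed
    show "?unshift ` ?P \<subseteq> (SIGMA s:?Z. {1..N - 1 - s 0})"
    proof
      fix a assume "a \<in> ?unshift ` ?P"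
      then obtain b where a: "a = ?unshift b" and b: "b \<in> dec_tuples n {0..<N}" "0 \<notin> b ` {..<n}"
        by auto
      have "restrict (\<lambda>i. b i - b (n - 1)) {..<n} 0 = b 0 - b (n - 1)"
        using n by simp
      then show "a \<in> (SIGMA s:?Z. {1..N - 1 - s 0})"
        unfolding a using unshift_in_dec_tuples_min_0[OF n b] by (intro SigmaI) simp_all
    qed
  qed
qed

lemma sum_dec_tuples_weighted_eq_sum_avoiding_0:
  fixes f :: "(nat \<Rightarrow> int) \<Rightarrow> real" and N :: int
  assumes n: "n \<ge> 1"
    and shift_invariant: "\<And>s c. s \<in> dec_tuples n {0..<N} \<Longrightarrow> f (restrict (\<lambda>i. s i + c) {..<n}) = f s"
  shows "(\<Sum>s\<in>{s \<in> dec_tuples n {0..<N}. s (n - 1) = 0}. of_int (N - 1 - s 0) * f s)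
    = (\<Sum>s\<in>{s \<in> dec_tuples n {0..<N}. 0 \<notin> s ` {..<n}}. f s)"
proof -
  let ?Z = "{s \<in> dec_tuples n {0..<N}. s (n - 1) = 0}"
  have fin: "finite ?Z"
    by (rule finite_subset[of _ "{..<n} \<rightarrow>\<^sub>E {0..<N}"]) (auto simp: dec_tuples_def finite_PiE)
  have "(\<Sum>s\<in>?Z. of_int (N - 1 - s 0) * f s)
      = (\<Sum>s\<in>?Z. \<Sum>c\<in>{1..N - 1 - s 0}. f (restrict (\<lambda>i. s i + c) {..<n}))"
  proof (intro sum.cong refl)
    fix s assume s: "s \<in> ?Z"
    then have "s 0 < N"
      using dec_tuples_mem[of s n "{0..<N}" 0] n by auto
    then show "of_int (N - 1 - s 0) * f s = (\<Sum>c\<in>{1..N - 1 - s 0}. f (restrict (\<lambda>i. s i + c) {..<n}))"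
      using s by (simp add: shift_invariant)
  qed
  also have "\<dots> = (\<Sum>(s, c)\<in>(SIGMA s:?Z. {1..N - 1 - s 0}). f (restrict (\<lambda>i. s i + c) {..<n}))"
    using fin by (rule sum.Sigma) simp
  also have "\<dots> = (\<Sum>s\<in>{s \<in> dec_tuples n {0..<N}. 0 \<notin> s ` {..<n}}. f s)"
    by (subst sum.reindex_bij_betw[OF bij_betw_shift_dec_tuples[OF n], symmetric])
      (simp add: case_prod_unfold)
  finally show ?thesis .
qed

lemma sum_norm_exp_det_sq_dec_avoiding_0:
  assumes N: "N > 0" and mu: "inj_on mu {..<n}" "mu ` {..<n} \<subseteq> {0..<int N}"
  shows "(\<Sum>s\<in>{s \<in> dec_tuples n {0..<int N}. 0 \<notin> s ` {..<n}}. (norm (exp_det n N mu s))\<^sup>2)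
    = real N ^ n - real n * real N ^ (n - 1)"
proof -
  let ?A = "{..<n} \<rightarrow>\<^sub>E {0..<int N}"
  let ?f = "\<lambda>t. if 0 \<notin> t ` {..<n} then (norm (exp_det n N mu t))\<^sup>2 else 0"
  have fin: "finite ?A" "finite (dec_tuples n {0..<int N})"
    by (auto simp: finite_PiE dec_tuples_def)
  have perm_invariant: "?f (restrict (t \<circ> \<pi>) {..<n}) = ?f t" if "\<pi> permutes {..<n}" for t \<pi>
  proof -
    have "norm (exp_det n N mu (restrict (t \<circ> \<pi>) {..<n})) = norm (exp_det n N mu t)"
      by (rule norm_exp_det_permute[OF that]) simp
    then show ?thesis
      by (simp only: image_restrict_permute[OF that])
  qed
  have "fact n * (\<Sum>s\<in>{s \<in> dec_tuples n {0..<int N}. 0 \<notin> s ` {..<n}}. (norm (exp_det n N mu s))\<^sup>2)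
      = fact n * (\<Sum>s\<in>dec_tuples n {0..<int N}. ?f s)"
    using fin by (simp add: sum.inter_filter)
  also have "\<dots> = (\<Sum>t\<in>{t \<in> ?A. inj_on t {..<n}}. ?f t)"
    using perm_invariant by (intro sum_inj_tuples_eq_fact_mult_sum_dec_tuples[symmetric])
  also have "\<dots> = (\<Sum>t\<in>?A. ?f t)"
    using fin exp_det_eq_0_if_not_inj by (intro sum.mono_neutral_left) auto
  also have "\<dots> = fact n * (real N ^ n - real n * real N ^ (n - 1))"
    using fin sum_norm_exp_det_sq_box_avoiding_0[OF N mu] by (simp add: sum.inter_filter)
  finally show ?thesis
    by simp
qed

section \<open>The alcove \<open>\<rho> + P\<^sub>\<kappa>\<close> and the sums \<open>J\<close>\<close>

lemma form_eq:
  assumes "n \<ge> 1"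
  shows "form n x y = (\<Sum>i<n. real_of_int (x i) * real_of_int (y i))
    - (\<Sum>i<n. real_of_int (x i)) * (\<Sum>j<n. real_of_int (y j)) / real n"
proof -
  have "form n x y = (\<Sum>i<n. \<Sum>j<n. (if i = j then real_of_int (x i) * real_of_int (y j) else 0)
      - real_of_int (x i) * real_of_int (y j) / real n)"
    unfolding form_def by (intro sum.cong refl) (simp add: algebra_simps)
  also have "\<dots> = (\<Sum>i<n. real_of_int (x i) * real_of_int (y i))
      - (\<Sum>i<n. \<Sum>j<n. real_of_int (x i) * real_of_int (y j)) / real n"
    by (simp add: sum_subtractf sum_divide_distrib)
  finally show ?thesis
    by (simp add: sum_product)
qed

lemma form_root:
  assumes "n \<ge> 1" "i < n" "j < n"
  shows "form n (\<lambda>k. eps i k - eps j k) lam = real_of_int (lam i - lam j)"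
proof -
  have "(\<Sum>k<n. real_of_int (eps i k - eps j k) * real_of_int (lam k)) = real_of_int (lam i) - real_of_int (lam j)"
    using assms by (simp add: eps_def left_diff_distrib sum_subtractf
        if_distrib[where f = "\<lambda>x. real_of_int x * _"] cong: if_cong)
  moreover have "(\<Sum>k<n. real_of_int (eps i k - eps j k)) = 0"
    using assms by (simp add: eps_def sum_subtractf if_distrib[of real_of_int] sum.delta cong: if_cong)
  ultimately show ?thesis
    using form_eq[OF assms(1)] by simp
qed

lemma mem_Pkappa_iff:
  assumes n: "n \<ge> 1"
  shows "nu \<in> Pkappa n \<kappa> \<longleftrightarrow> (\<forall>i \<ge> n - 1. nu i = 0) \<and> (\<forall>i j. i < j \<and> j < n \<longrightarrow> nu j \<le> nu i)
    \<and> nu 0 - nu (n - 1) \<le> int \<kappa>"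
proof -
  have "form n (\<lambda>k. eps i k - eps j k) nu \<ge> 0 \<longleftrightarrow> nu j \<le> nu i" if "i < j" "j < n" for i j
    using form_root[OF n, of i j nu] that by simp
  moreover have "form n (\<lambda>k. eps 0 k - eps (n - 1) k) nu \<le> real \<kappa> \<longleftrightarrow> nu 0 - nu (n - 1) \<le> int \<kappa>"
    using form_root[OF n, of 0 "n - 1" nu] n by linarith
  ultimately show ?thesis
    unfolding Pkappa_def normrep_def by (auto simp del: of_int_diff)
qed

lemma rhoPkappa_memD:
  assumes n: "n \<ge> 1" and "lam \<in> rhoPkappa n \<kappa>"
  shows "(\<forall>i \<ge> n. lam i = 0) \<and> lam (n - 1) = 0 \<and>
    (\<forall>k<n. lam k \<in> {0..<int (n + \<kappa>)}) \<and> (\<forall>i j. i < j \<longrightarrow> j < n \<longrightarrow> lam j < lam i)"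
proof -
  obtain nu where nu: "nu \<in> Pkappa n \<kappa>" and lam: "lam = (\<lambda>i. rho n i + nu i)"
    using assms(2) unfolding rhoPkappa_def by auto
  note nu = nu[unfolded mem_Pkappa_iff[OF n]]
  have dec: "\<forall>i j. i < j \<longrightarrow> j < n \<longrightarrow> lam j < lam i"
  proof (intro allI impI)
    fix i j assume "i < j" "j < n"
    moreover from this have "nu j \<le> nu i"
      using nu by blast
    ultimately show "lam j < lam i"
      by (simp add: lam rho_def)
  qed
  have "lam (n - 1) \<le> lam k" "lam k \<le> lam 0" if "k < n" for k
  proof -
    have "lam (n - 1) + int (n - 1 - k) \<le> lam k" "lam k + int (k - 0) \<le> lam 0"
      using that dec by (intro strict_dec_gap[of n lam]; simp)+
    then show "lam (n - 1) \<le> lam k" "lam k \<le> lam 0"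
      by linarith+
  qed
  moreover have "lam (n - 1) = 0" "lam 0 < int (n + \<kappa>)"
    using nu n by (auto simp: lam rho_def)
  ultimately show ?thesis
    using nu dec n by (force simp: lam rho_def)
qed

lemma rhoPkappa_memI:
  assumes n: "n \<ge> 1" and lam: "(\<forall>i \<ge> n. lam i = 0) \<and> lam (n - 1) = 0 \<and>
    (\<forall>k<n. lam k \<in> {0..<int (n + \<kappa>)}) \<and> (\<forall>i j. i < j \<longrightarrow> j < n \<longrightarrow> lam j < lam i)"
  shows "lam \<in> rhoPkappa n \<kappa>"
proof -
  define nu where "nu i = lam i - rho n i" for i
  have "nu j \<le> nu i" if "i < j" "j < n" for i j
    using strict_dec_gap[of n lam i j] lam that by (simp add: nu_def rho_def)
  moreover have "nu i = 0" if "n - 1 \<le> i" for i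
    using lam that n by (cases "i = n - 1") (auto simp: nu_def rho_def)
  moreover have "nu 0 - nu (n - 1) \<le> int \<kappa>"
    using lam n by (auto simp: nu_def rho_def)
  ultimately have "nu \<in> Pkappa n \<kappa>"
    unfolding mem_Pkappa_iff[OF n] by blast
  moreover have "lam = (\<lambda>i. rho n i + nu i)"
    by (simp add: nu_def)
  ultimately show ?thesis
    unfolding rhoPkappa_def by blast
qed

lemma mem_rhoPkappa_iff:
  assumes "n \<ge> 1"
  shows "lam \<in> rhoPkappa n \<kappa> \<longleftrightarrow> (\<forall>i \<ge> n. lam i = 0) \<and> lam (n - 1) = 0 \<and>
    (\<forall>k<n. lam k \<in> {0..<int (n + \<kappa>)}) \<and> (\<forall>i j. i < j \<longrightarrow> j < n \<longrightarrow> lam j < lam i)"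
  by (rule iffI[OF rhoPkappa_memD[OF assms] rhoPkappa_memI[OF assms]])

lemma bij_betw_restrict_rhoPkappa:
  assumes n: "n \<ge> 1"
  shows "bij_betw (\<lambda>lam. restrict lam {..<n}) (rhoPkappa n \<kappa>)
    {s \<in> dec_tuples n {0..<int (n + \<kappa>)}. s (n - 1) = 0}"
proof (rule bij_betw_byWitness[where f' = "\<lambda>s i. if i < n then s i else 0"])
  have last: "n - 1 < n"
    using n by simp
  show "\<forall>lam\<in>rhoPkappa n \<kappa>. (\<lambda>i. if i < n then restrict lam {..<n} i else 0) = lam"
    by (auto simp: mem_rhoPkappa_iff[OF n] not_less)
  show "\<forall>s\<in>{s \<in> dec_tuples n {0..<int (n + \<kappa>)}. s (n - 1) = 0}.
      restrict (\<lambda>i. if i < n then s i else 0) {..<n} = s"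
    by (auto simp: dec_tuples_def intro: restrict_eq_PiE)
  show "(\<lambda>lam. restrict lam {..<n}) ` rhoPkappa n \<kappa>
      \<subseteq> {s \<in> dec_tuples n {0..<int (n + \<kappa>)}. s (n - 1) = 0}"
    using last by (auto simp: mem_rhoPkappa_iff[OF n] restrict_in_dec_tuples_iff)
  show "(\<lambda>s i. if i < n then s i else 0) ` {s \<in> dec_tuples n {0..<int (n + \<kappa>)}. s (n - 1) = 0}
      \<subseteq> rhoPkappa n \<kappa>"
  proof clarify
    fix s assume s: "s \<in> dec_tuples n {0..<int (n + \<kappa>)}" "s (n - 1) = 0"
    show "(\<lambda>i. if i < n then s i else 0) \<in> rhoPkappa n \<kappa>"
      unfolding mem_rhoPkappa_iff[OF n] using s last dec_tuples_mem[OF s(1)] dec_tuples_less[OF s(1)]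
      by auto
  qed
qed

text \<open>\<open>J(\<lambda>, \<mu>)\<close> is \<open>exp_det\<close> up to the phase coming from the \<open>-1/n\<close> part of the form, which
  does not depend on \<open>w\<close>.\<close>
lemma norm_J_eq:
  assumes n: "n \<ge> 1"
  shows "norm (J n \<kappa> lam mu) = norm (exp_det n (n + \<kappa>) mu lam)"
proof -
  define N where "N = n + \<kappa>"
  define C where "C = (\<Sum>i<n. real_of_int (lam i)) * (\<Sum>j<n. real_of_int (mu j)) / real n"
  define E where "E = exp (- (2 * of_real pi * \<i> / of_nat N * of_real C))"
  have form_W: "form n (Wact w lam) mu = (\<Sum>i<n. real_of_int (lam i * mu (w i))) - C"
    if w: "w permutes {..<n}" for w
  proof -
    have "(\<Sum>i<n. real_of_int (lam (inv w i)) * real_of_int (mu i))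
        = (\<Sum>i<n. real_of_int (lam (inv w (w i))) * real_of_int (mu (w i)))"
      using sum.permute[OF w, of "\<lambda>i. real_of_int (lam (inv w i)) * real_of_int (mu i)"]
      by (simp add: comp_def)
    moreover have "(\<Sum>i<n. real_of_int (lam (inv w i))) = (\<Sum>i<n. real_of_int (lam (inv w (w i))))"
      using sum.permute[OF w, of "\<lambda>i. real_of_int (lam (inv w i))"] by (simp add: comp_def)
    ultimately show ?thesis
      unfolding form_eq[OF n] Wact_def C_def by (simp add: permutes_inverses(2)[OF w])
  qed
  have "J n \<kappa> lam mu = exp_det n N mu lam * E"
    unfolding J_def exp_det_def sum_distrib_right N_def[symmetric]
  proof (intro sum.cong refl)
    fix w assume "w \<in> {w. w permutes {..<n}}"
    then have "exp (2 * pi * \<i> / of_nat N * of_real (form n (Wact w lam) mu))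
        = exp ((\<Sum>i<n. 2 * pi * \<i> * of_int (lam i * mu (w i)) / of_nat N)
          + (- (2 * of_real pi * \<i> / of_nat N * of_real C)))"
      by (simp add: form_W sum_distrib_left sum_divide_distrib algebra_simps)
    also have "\<dots> = (\<Prod>i<n. unity_root N (lam i * mu (w i))) * E"
      unfolding exp_add E_def unity_root_def by (simp only: exp_sum[OF finite_lessThan])
    finally show "of_int (sign w) * exp (2 * pi * \<i> / of_nat N * of_real (form n (Wact w lam) mu))
        = of_int (sign w) * (\<Prod>i<n. unity_root N (lam i * mu (w i))) * E"
      by simp
  qed
  moreover have "norm E = 1"
    unfolding E_def by (simp add: norm_exp_eq_Re)
  ultimately show ?thesis
    by (simp add: norm_mult N_def)
qed

theorem lemma8p5:
  fixes n \<kappa> :: nat and mu :: "nat \<Rightarrow> int"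
  assumes "n \<ge> 1" and "\<kappa> \<ge> 1" and "mu \<in> rhoPkappa n \<kappa>"
  shows "(\<Sum>lam\<in>rhoPkappa n \<kappa>. real_of_int (gamma n \<kappa> lam) * (cmod (J n \<kappa> lam mu))\<^sup>2)
           = real \<kappa> * real (n + \<kappa>) ^ (n - 1)"
proof -
  define N where "N = n + \<kappa>"
  let ?D = "\<lambda>t. (norm (exp_det n N mu t))\<^sup>2"
  have N: "N > 0"
    using assms(1) by (simp add: N_def)
  have "restrict mu {..<n} \<in> dec_tuples n {0..<int N}"
    using bij_betwE[OF bij_betw_restrict_rhoPkappa[OF assms(1)]] assms(3) by (auto simp: N_def)
  then have mu: "inj_on mu {..<n}" "mu ` {..<n} \<subseteq> {0..<int N}"
    using dec_tuples_inj_on dec_tuples_mem by fastforce+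
  have "(\<Sum>lam\<in>rhoPkappa n \<kappa>. real_of_int (gamma n \<kappa> lam) * (cmod (J n \<kappa> lam mu))\<^sup>2)
      = (\<Sum>lam\<in>rhoPkappa n \<kappa>. of_int (int N - 1 - restrict lam {..<n} 0) * ?D (restrict lam {..<n}))"
    using assms(1) by (intro sum.cong refl) (simp add: gamma_def norm_J_eq N_def)
  also have "\<dots> = (\<Sum>s\<in>{s \<in> dec_tuples n {0..<int N}. s (n - 1) = 0}. of_int (int N - 1 - s 0) * ?D s)"
    using bij_betw_restrict_rhoPkappa[OF assms(1), of \<kappa>] unfolding N_def by (rule sum.reindex_bij_betw)
  also have "\<dots> = (\<Sum>s\<in>{s \<in> dec_tuples n {0..<int N}. 0 \<notin> s ` {..<n}}. ?D s)"
    using assms(1) by (rule sum_dec_tuples_weighted_eq_sum_avoiding_0) (simp add: norm_exp_det_shift)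
  also have "\<dots> = real N ^ n - real n * real N ^ (n - 1)"
    using N mu by (rule sum_norm_exp_det_sq_dec_avoiding_0)
  also have "\<dots> = real \<kappa> * real (n + \<kappa>) ^ (n - 1)"
    using assms(1) by (cases n) (simp_all add: N_def algebra_simps)
  finally show ?thesis .
qed

end
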